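(* Let $N\ge2$ and $z_1,z_2\in\mathbb{C}$. Then $$D_{1,2}^{(N,2)}(z_1,z_2)=\frac{(z_1-\overline{z}_1)(z_2-\overline{z}_2)e^{-2|z_1-z_2|^2}}{(1-|z_1-z_2|^2)|z_1-\overline{z}_2|^2}\,\widehat{T}D_{1,1}^{(N,2)}(z_1,z_2)=-\frac{NZ_{N-1}^{(\mathrm{over})}(z_1,\overline{z}_2)}{Z_N^{(\mathrm g)}}|z_1-\overline{z}_1|^2|z_2-\overline{z}_2|^2(\overline{z}_2-z_1)e^{-2|z_1|^2-2|z_2|^2}\varkappa_{N-1}^{(\mathrm{over})}(z_2,\overline{z}_1|z_1,\overline{z}_2).$$
   Context: $dA(z)=d^2z/\pi$, $Z_N^{(\mathrm g)}=N!\prod_{k=0}^{N-1}\frac{(2k+1)!}{2^{2k+1}}$. Treat each complex variable $x$ and its conjugate $\overline x$ as independent variables. For $x,y\in\mathbb{C}$ put $\omega^{(\mathrm{over})}(z,\overline z|x,y):=(z-y)(\overline{z}-x)(1+(z-x)(\overline{z}-y))e^{-2z\overline{z}}$ (for $y=\overline x$ this is the weight $|z-\overline x|^2(1+|z-x|^2)e^{-2|z|^2}$). $Z_{n}^{(\mathrm{over})}(x,y):=\int_{\mathbb{C}^n}\prod_{j<k}|w_j-w_k|^2|w_j-\overline{w}_k|^2\prod_j|w_j-\overline{w}_j|^2\omega^{(\mathrm{over})}(w_j,\overline w_j|x,y)dA(w_j)$. For $y=\overline x$, $\varkappa_n^{(\mathrm{over})}(u,v|x,\overline x)=\sum_{k=0}^{n-1}\frac{q_{2k+1}(u)q_{2k}(v)-q_{2k}(u)q_{2k+1}(v)}{r_k}$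 is the skew-kernel of skew-orthogonal polynomials $q_k$ with skew-norms $r_k$ for the weight $\omega^{(\mathrm{over})}(\cdot|x,\overline x)$ and skew-product $\langle f,g\rangle_s=\int(f\overline g-g\overline f)(z-\overline z)\omega\,dA$ (i.e. $\langle q_{2k},q_{2\ell}\rangle_s=\langle q_{2k+1},q_{2\ell+1}\rangle_s=0$, $\langle q_{2k},q_{2\ell+1}\rangle_s=r_k\delta_{k\ell}$); it depends on $x,\overline x$ only through the weight's moments, and $\varkappa_n^{(\mathrm{over})}(u,v|x,y)$ denotes the same expression with $\overline x$ replaced by the independent variable $y$. Define $$D_{1,1}^{(N,2)}(z_1,z_2):=\frac{N(N-1)}{Z_N^{(\mathrm g)}}|z_1-\overline z_1|^2e^{-2|z_1|^2}\int_{\mathbb{C}^{N-2}}\prod_{2\le j<l\le N}|z_j-z_l|^2|z_j-\overline z_l|^2\prod_{l=2}^N|z_l-\overline z_l|^2\omega^{(\mathrm{over})}(z_l,\overline z_l|z_1,\overline z_1)\prod_{j=3}^NdA(z_j),$$ written as a function of $z_1,\overline z_1,z_2,\overline z_2$ (all moduli $|u|^2$ written as $u\overline u$), and the mean off-diagonal overlap $$D_{1,2}^{(N,2)}(z_1,z_2):=-\frac{N(N-1)}{Z_N^{(\mathrm g)}}|z_1-\overline z_1|^2|z_2-\overline z_2|^2|z_1-\overline z_2|^2e^{-2|z_1|^2-2|z_2|^2}\int_{\mathbb{C}^{N-2}}\prod_{3\le k<l\le N}|z_l-z_k|^2|z_l-\overline z_k|^2\prod_{j=3}^N|z_1-\overline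 z_j|^2|z_2-\overline z_j|^2\big(|z_1-z_j|^2|z_2-z_j|^2+(\overline z_1-\overline z_j)(z_2-z_j)\big)|z_j-\overline z_j|^2e^{-2|z_j|^2}dA(z_j).$$ The transposition $\widehat T$ acts on a function $g(z_1,\overline z_1,z_2,\overline z_2)$ by $\widehat Tg(z_1,\overline z_1,z_2,\overline z_2)=g(z_1,\overline z_2,z_2,\overline z_1)$. *)

theory Defs
  imports "HOL-Analysis.Analysis" "Jordan_Normal_Form.Gauss_Jordan_Elimination"
begin

text \<open>Measure dA(z) = d^2 z / pi: we integrate w.r.t. lborel on complex and divide by pi.\<close>

definition Zg :: "nat \<Rightarrow> real" where
  "Zg N = fact N * (\<Prod>k<N. fact (2*k+1) / 2 ^ (2*k+1))"

definition omega_over :: "complex \<Rightarrow> complex \<Rightarrow> complex \<Rightarrow> complex \<Rightarrow> complex" where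
  "omega_over z zb x y = (z - y) * (zb - x) * (1 + (z - x) * (zb - y)) * exp (-2 * z * zb)"

definition Z_over :: "nat \<Rightarrow> complex \<Rightarrow> complex \<Rightarrow> complex" where
  "Z_over n x y = (1 / of_real (pi ^ n)) *
     (\<integral>w. (\<Prod>k<n. \<Prod>j<k. of_real ((cmod (w j - w k))\<^sup>2 * (cmod (w j - cnj (w k)))\<^sup>2)) *
            (\<Prod>j<n. of_real ((cmod (w j - cnj (w j)))\<^sup>2) * omega_over (w j) (cnj (w j)) x y)
       \<partial>(PiM {..<n} (\<lambda>_. lborel)))"

definition skew_moment :: "complex \<Rightarrow> complex \<Rightarrow> nat \<Rightarrow> nat \<Rightarrow> complex" where
  "skew_moment x y j k = (1 / of_real pi) *
     (\<integral>z. (z ^ j * cnj z ^ k - z ^ k * cnj z ^ j) * (z - cnj z) * omega_over z (cnj z) x y \<partial>lborel)"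

definition skew_moment_mat :: "nat \<Rightarrow> complex \<Rightarrow> complex \<Rightarrow> complex mat" where
  "skew_moment_mat n x y = mat (2*n) (2*n) (\<lambda>(j,k). skew_moment x y j k)"

text \<open>The skew kernel varkappa_n^(over)(u,v|x,y) = sum_k (q_{2k+1}(u) q_{2k}(v) - q_{2k}(u) q_{2k+1}(v))/r_k,
  written through the moments: it equals sum_{j,k<2n} u^j (M^{-1})_{jk} v^k, M the skew moment matrix.\<close>
definition kappa_over :: "nat \<Rightarrow> complex \<Rightarrow> complex \<Rightarrow> complex \<Rightarrow> complex \<Rightarrow> complex" where
  "kappa_over n u v x y =
     (let B = the (mat_inverse (skew_moment_mat n x y))
      in \<Sum>j<2*n. \<Sum>k<2*n. u ^ j * B $$ (j,k) * v ^ k)"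

text \<open>D_{1,1}^{(N,2)} as a function of the four independent variables
  a = z1, b = conj z1, c = z2, d = conj z2. Integration variables w_l, l = 3..N.\<close>
definition D11 :: "nat \<Rightarrow> complex \<Rightarrow> complex \<Rightarrow> complex \<Rightarrow> complex \<Rightarrow> complex" where
  "D11 N a b c d =
     of_real (real N * (real N - 1) / Zg N) * ((a - b) * (b - a)) * exp (-2 * a * b) *
     (1 / of_real (pi ^ (N - 2))) *
     (\<integral>w. (let Z = (\<lambda>l. if l = 2 then c else w l);
                 Zb = (\<lambda>l. if l = 2 then d else cnj (w l))
             in (\<Prod>l\<in>{2..N}. \<Prod>j\<in>{2..<l}.
                    (Z j - Z l) * (Zb j - Zb l) * (Z j - Zb l) * (Zb j - Z l)) *
                (\<Prod>l\<in>{2..N}. (Z l - Zb l) * (Zb l - Z l) * omega_over (Z l) (Zb l) a b))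
       \<partial>(PiM {3..N} (\<lambda>_. lborel)))"

definition transpT ::
  "(complex \<Rightarrow> complex \<Rightarrow> complex \<Rightarrow> complex \<Rightarrow> complex) \<Rightarrow> complex \<Rightarrow> complex \<Rightarrow> complex \<Rightarrow> complex \<Rightarrow> complex" where
  "transpT g a b c d = g a d c b"

definition D12 :: "nat \<Rightarrow> complex \<Rightarrow> complex \<Rightarrow> complex" where
  "D12 N z1 z2 =
     - of_real (real N * (real N - 1) / Zg N) *
     of_real ((cmod (z1 - cnj z1))\<^sup>2 * (cmod (z2 - cnj z2))\<^sup>2 * (cmod (z1 - cnj z2))\<^sup>2) *
     exp (- 2 * of_real ((cmod z1)\<^sup>2) - 2 * of_real ((cmod z2)\<^sup>2)) *
     (1 / of_real (pi ^ (N - 2))) *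
     (\<integral>w. (\<Prod>l\<in>{3..N}. \<Prod>k\<in>{3..<l}.
              of_real ((cmod (w l - w k))\<^sup>2 * (cmod (w l - cnj (w k)))\<^sup>2)) *
          (\<Prod>j\<in>{3..N}. of_real ((cmod (z1 - cnj (w j)))\<^sup>2 * (cmod (z2 - cnj (w j)))\<^sup>2) *
              (of_real ((cmod (z1 - w j))\<^sup>2 * (cmod (z2 - w j))\<^sup>2) + (cnj z1 - cnj (w j)) * (z2 - w j)) *
              of_real ((cmod (w j - cnj (w j)))\<^sup>2) * exp (- 2 * of_real ((cmod (w j))\<^sup>2)))
       \<partial>(PiM {3..N} (\<lambda>_. lborel)))"

end

theory Submission
  imports Defs "HOL-Probability.Distributions" "Jordan_Normal_Form.Determinant"
begin

text \<open>Put \<open>u = z2\<close> and \<open>v = cnj z1\<close>. Up to the factor \<open>v - u\<close>, the integrand of \<open>D12\<close> is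
  the Vandermonde product of the \<open>2N - 2\<close> points \<open>u, v, w\<^sub>3, cnj w\<^sub>3, \<dots>, w\<^sub>N, cnj w\<^sub>N\<close>
  times the weights \<open>(w\<^sub>j - cnj w\<^sub>j) \<omega>\<^sup>o\<^sup>v\<^sup>e\<^sup>r(w\<^sub>j | z1, cnj z2)\<close>. The integrand
  of the transposed \<open>D11\<close> is the same Vandermonde product times factors depending only on
  \<open>z1, z2\<close>, which gives the first identity.

  For the second, Leibniz's expansion of the Vandermonde determinant and Fubini's theorem turn
  \<open>Z\<^sub>n\<^sup>o\<^sup>v\<^sup>e\<^sup>r\<close> into the Pfaffian sum \<open>\<Sum>\<^sub>\<sigma> sgn \<sigma> \<Prod>\<^sub>i m(\<sigma>(2i), \<sigma>(2i+1))\<close> of the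
  one-point moments \<open>m(j,k)\<close> of the weight, and the \<open>D12\<close> integral into the same sum in which
  the first pair of positions carries \<open>u\<^sup>\<sigma>\<^sup>(\<^sup>0\<^sup>) v\<^sup>\<sigma>\<^sup>(\<^sup>1\<^sup>)\<close> instead of a moment. Expanding a
  Pfaffian sum along the pair containing a fixed index shows that these partial sums are,
  up to the factor \<open>-Z\<^sub>N\<^sub>-\<^sub>1\<^sup>o\<^sup>v\<^sup>e\<^sup>r / (N - 1)\<close>, the entries of the inverse of the skew moment
  matrix \<open>m(j,k) - m(k,j)\<close>; summed against \<open>u\<^sup>j v\<^sup>k\<close> they give the skew kernel.\<close>

section \<open>Polynomially bounded functions against a Gaussian\<close>

definition polynomially_bounded :: "('a::real_normed_vector \<Rightarrow> 'b::real_normed_vector) \<Rightarrow> bool" where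
  "polynomially_bounded f \<longleftrightarrow> (\<exists>C k. \<forall>w. norm (f w) \<le> C * (1 + norm w) ^ k)"

lemma polynomially_boundedE:
  assumes "polynomially_bounded f"
  obtains C k where "C \<ge> 0" "\<And>w. norm (f w) \<le> C * (1 + norm w) ^ k"
proof -
  obtain C k where bound: "\<And>w. norm (f w) \<le> C * (1 + norm w) ^ k"
    using assms unfolding polynomially_bounded_def by blast
  have "C \<ge> 0"
    using order_trans[OF norm_ge_zero bound[of 0]] by simp
  with bound show ?thesis using that by blast
qed

lemma polynomially_bounded_const: "polynomially_bounded (\<lambda>w. c)"
  unfolding polynomially_bounded_def by (rule exI[of _ "norm c"], rule exI[of _ 0]) auto

lemma polynomially_bounded_ident: "polynomially_bounded (\<lambda>w. w)"
  unfolding polynomially_bounded_def by (rule exI[of _ 1], rule exI[of _ 1]) auto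

lemma polynomially_bounded_cnj: "polynomially_bounded (\<lambda>w. cnj w)"
  unfolding polynomially_bounded_def by (rule exI[of _ 1], rule exI[of _ 1]) auto

lemma polynomially_bounded_add:
  assumes "polynomially_bounded f" "polynomially_bounded g"
  shows "polynomially_bounded (\<lambda>w. f w + g w)"
proof -
  obtain C k where "C \<ge> 0" and f: "\<And>w. norm (f w) \<le> C * (1 + norm w) ^ k"
    using polynomially_boundedE[OF assms(1)] by blast
  obtain D l where "D \<ge> 0" and g: "\<And>w. norm (g w) \<le> D * (1 + norm w) ^ l"
    using polynomially_boundedE[OF assms(2)] by blast
  have "norm (f w + g w) \<le> (C + D) * (1 + norm w) ^ (k + l)" for w
  proof -
    have "(1 + norm w) ^ k \<le> (1 + norm w) ^ (k + l)" "(1 + norm w) ^ l \<le> (1 + norm w) ^ (k + l)"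
      by (auto intro: power_increasing)
    then have "C * (1 + norm w) ^ k + D * (1 + norm w) ^ l \<le> (C + D) * (1 + norm w) ^ (k + l)"
      using \<open>C \<ge> 0\<close> \<open>D \<ge> 0\<close> by (simp add: distrib_right add_mono mult_left_mono)
    then show ?thesis
      using norm_triangle_ineq[of "f w" "g w"] f[of w] g[of w] by linarith
  qed
  then show ?thesis unfolding polynomially_bounded_def by blast
qed

lemma polynomially_bounded_minus:
  assumes "polynomially_bounded f"
  shows "polynomially_bounded (\<lambda>w. - f w)"
  using assms unfolding polynomially_bounded_def by simp

lemma polynomially_bounded_diff:
  assumes "polynomially_bounded f" "polynomially_bounded g"
  shows "polynomially_bounded (\<lambda>w. f w - g w)"
  using polynomially_bounded_add[OF assms(1) polynomially_bounded_minus[OF assms(2)]] by simp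

lemma polynomially_bounded_mult:
  fixes f g :: "'a::real_normed_vector \<Rightarrow> 'b::real_normed_algebra"
  assumes "polynomially_bounded f" "polynomially_bounded g"
  shows "polynomially_bounded (\<lambda>w. f w * g w)"
proof -
  obtain C k where "C \<ge> 0" and f: "\<And>w. norm (f w) \<le> C * (1 + norm w) ^ k"
    using polynomially_boundedE[OF assms(1)] by blast
  obtain D l where g: "\<And>w. norm (g w) \<le> D * (1 + norm w) ^ l"
    using polynomially_boundedE[OF assms(2)] by blast
  have "norm (f w * g w) \<le> (C * D) * (1 + norm w) ^ (k + l)" for w
  proof -
    have "norm (f w * g w) \<le> norm (f w) * norm (g w)" by (rule norm_mult_ineq)
    also have "\<dots> \<le> (C * (1 + norm w) ^ k) * (D * (1 + norm w) ^ l)"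
      using \<open>C \<ge> 0\<close> by (intro mult_mono f g) auto
    finally show ?thesis by (simp add: power_add mult_ac)
  qed
  then show ?thesis unfolding polynomially_bounded_def by blast
qed

lemma polynomially_bounded_power:
  fixes f :: "'a::real_normed_vector \<Rightarrow> 'b::real_normed_algebra_1"
  assumes "polynomially_bounded f"
  shows "polynomially_bounded (\<lambda>w. f w ^ n)"
  by (induction n) (simp_all add: polynomially_bounded_const polynomially_bounded_mult assms)

lemmas polynomially_bounded_intros =
  polynomially_bounded_const polynomially_bounded_ident polynomially_bounded_cnj
  polynomially_bounded_add polynomially_bounded_diff polynomially_bounded_mult
  polynomially_bounded_power

lemma one_plus_power_mult_exp_le:
  fixes t :: real
  assumes "t \<ge> 0"
  shows "(1 + t) ^ k * exp (- 2 * t\<^sup>2) \<le> exp (real k ^ 2) * exp (- t\<^sup>2 / 2)"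
proof -
  have "(1 + t) ^ k \<le> exp (real k * t)"
  proof (cases "k = 0")
    case False
    have "0 \<le> real k * t" using assms by simp
    then have "(1 + (real k * t) / real k) ^ k \<le> exp (real k * t)"
      by (intro exp_ge_one_plus_x_over_n_power_n) (use False in auto)
    then show ?thesis using False by simp
  qed simp
  also have "\<dots> \<le> exp (real k ^ 2 + (3/2) * t\<^sup>2)"
  proof -
    have "(real k - t/2)^2 = real k ^ 2 - real k * t + t\<^sup>2/4"
      by (simp add: power2_eq_square algebra_simps)
    moreover have "0 \<le> (real k - t/2)^2" "0 \<le> t\<^sup>2" by simp_all
    ultimately have "real k * t \<le> real k ^ 2 + (3/2) * t\<^sup>2" by linarith
    then show ?thesis by simp
  qed
  finally have "(1 + t) ^ k * exp (- 2 * t\<^sup>2) \<le> exp (real k ^ 2 + (3/2) * t\<^sup>2) * exp (- 2 * t\<^sup>2)"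
    by (rule mult_right_mono) simp
  also have "\<dots> = exp (real k ^ 2) * exp (- t\<^sup>2 / 2)"
    by (simp add: exp_add[symmetric] algebra_simps)
  finally show ?thesis .
qed

lemma integrable_exp_minus_cmod_sq_half: "integrable lborel (\<lambda>w::complex. exp (- (cmod w)\<^sup>2 / 2))"
proof -
  let ?g = "\<lambda>x::real. exp (- x\<^sup>2 / 2)"
  have "integrable lborel (\<lambda>x. sqrt (2 * pi) * std_normal_density x)" by simp
  moreover have "(\<lambda>x. sqrt (2 * pi) * std_normal_density x) = ?g"
    by (auto simp: std_normal_density_def)
  ultimately have "integrable lborel ?g" by simp
  interpret product_sigma_finite "\<lambda>_::complex. (lborel :: real measure)"
    by (simp add: product_sigma_finite_def sigma_finite_lborel)
  have "integrable (Pi\<^sub>M Basis (\<lambda>_::complex. lborel)) (\<lambda>f. \<Prod>b\<in>Basis. ?g (f b))"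
    by (rule product_integrable_prod) (use \<open>integrable lborel ?g\<close> in auto)
  moreover have "(\<Prod>b\<in>(Basis::complex set). ?g (f b)) = exp (- (cmod (\<Sum>b\<in>Basis. f b *\<^sub>R b))\<^sup>2 / 2)"
    for f :: "complex \<Rightarrow> real"
  proof -
    have "(\<Sum>b\<in>(Basis::complex set). f b *\<^sub>R b) = Complex (f 1) (f \<i>)"
      by (simp add: Basis_complex_def complex_eq_iff)
    then show ?thesis
      by (simp add: Basis_complex_def cmod_def exp_add[symmetric] add_divide_distrib)
  qed
  ultimately have "integrable (distr (Pi\<^sub>M Basis (\<lambda>_::complex. lborel)) borel (\<lambda>f. \<Sum>b\<in>Basis. f b *\<^sub>R b))
      (\<lambda>w::complex. exp (- (cmod w)\<^sup>2 / 2))"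
    by (subst integrable_distr_eq) auto
  then show ?thesis by (simp add: lborel_eq[symmetric])
qed

lemma integrable_polynomially_bounded_mult_gauss:
  assumes "polynomially_bounded P" "continuous_on UNIV P"
  shows "integrable lborel (\<lambda>w::complex. P w * exp (-2 * w * cnj w))"
proof -
  obtain C k where "C \<ge> 0" and P: "\<And>w. cmod (P w) \<le> C * (1 + cmod w) ^ k"
    using polynomially_boundedE[OF assms(1)] by blast
  have bound: "norm (P w * exp (-2 * w * cnj w)) \<le> norm ((C * exp (real k ^ 2)) * exp (- (cmod w)\<^sup>2 / 2))"
    for w
  proof -
    have "-2 * w * cnj w = complex_of_real (-2 * (cmod w)\<^sup>2)"
      by (simp add: mult.assoc complex_norm_square[symmetric])
    then have "norm (P w * exp (-2 * w * cnj w)) = cmod (P w) * exp (-2 * (cmod w)\<^sup>2)"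
      by (simp only: exp_of_real norm_mult) simp
    also have "\<dots> \<le> C * ((1 + cmod w) ^ k * exp (-2 * (cmod w)\<^sup>2))"
      using mult_right_mono[OF P, of "exp (-2 * (cmod w)\<^sup>2)" w] by (simp add: mult.assoc)
    also have "\<dots> \<le> C * (exp (real k ^ 2) * exp (- (cmod w)\<^sup>2 / 2))"
      using \<open>C \<ge> 0\<close> by (intro mult_left_mono one_plus_power_mult_exp_le) auto
    finally show ?thesis using \<open>C \<ge> 0\<close> by simp
  qed
  show ?thesis
  proof (rule Bochner_Integration.integrable_bound)
    show "integrable lborel (\<lambda>w::complex. (C * exp (real k ^ 2)) * exp (- (cmod w)\<^sup>2 / 2))"
      using integrable_exp_minus_cmod_sq_half by simp
    show "(\<lambda>w. P w * exp (-2 * w * cnj w)) \<in> borel_measurable lborel"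
      unfolding measurable_lborel2 by (intro borel_measurable_continuous_onI continuous_intros assms(2))
  qed (use bound in simp)
qed

section \<open>Vandermonde products\<close>

definition vandermonde :: "nat \<Rightarrow> (nat \<Rightarrow> 'a::comm_ring_1) \<Rightarrow> 'a" where
  "vandermonde m Y = (\<Prod>b<m. \<Prod>a<b. Y b - Y a)"

definition vandermonde_mat :: "nat \<Rightarrow> (nat \<Rightarrow> 'a::comm_ring_1) \<Rightarrow> 'a mat" where
  "vandermonde_mat m Y = mat m m (\<lambda>(i,j). Y i ^ j)"

definition unit_bidiagonal_mat :: "nat \<Rightarrow> 'a::comm_ring_1 \<Rightarrow> 'a mat" where
  "unit_bidiagonal_mat m c = mat m m (\<lambda>(k,j). (if k = j then 1 else 0) + (if Suc k = j then - c else 0))"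

lemma vandermonde_mat_carrier: "vandermonde_mat m Y \<in> carrier_mat m m"
  by (simp add: vandermonde_mat_def)

lemma unit_bidiagonal_mat_carrier: "unit_bidiagonal_mat m c \<in> carrier_mat m m"
  by (simp add: unit_bidiagonal_mat_def)

lemma vandermonde_Suc:
  "vandermonde (Suc m) Y = vandermonde m (\<lambda>i. Y (Suc i)) * (\<Prod>j<m. Y (Suc j) - Y 0)"
proof -
  have "vandermonde (Suc m) Y = (\<Prod>b<m. \<Prod>a<Suc b. Y (Suc b) - Y a)"
    unfolding vandermonde_def by (subst prod.lessThan_Suc_shift) simp
  also have "\<dots> = (\<Prod>b<m. (Y (Suc b) - Y 0) * (\<Prod>a<b. Y (Suc b) - Y (Suc a)))"
    by (subst prod.lessThan_Suc_shift) simp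
  finally show ?thesis
    unfolding vandermonde_def prod.distrib by simp
qed

lemma det_unit_bidiagonal_mat: "det (unit_bidiagonal_mat m c) = 1"
  by (subst det_upper_triangular[of _ m])
    (auto simp: unit_bidiagonal_mat_def upper_triangular_def prod_list_diag_prod)

lemma det_mat_diag: "det (mat_diag m d) = (\<Prod>j<m. d j)"
  by (subst det_upper_triangular[of _ m])
    (auto simp: mat_diag_def upper_triangular_def prod_list_diag_prod atLeast0LessThan)

text \<open>Subtracting \<open>Y 0\<close> times each column from the next one clears the first row of the
  Vandermonde matrix.\<close>

lemma vandermonde_mat_mult_unit_bidiagonal:
  assumes "i < m" "j < m"
  shows "(vandermonde_mat m Y * unit_bidiagonal_mat m (Y 0)) $$ (i, j) =
    (if j = 0 then 1 else Y i ^ (j - 1) * (Y i - Y 0))"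
proof -
  have "(vandermonde_mat m Y * unit_bidiagonal_mat m (Y 0)) $$ (i, j) =
      (\<Sum>k<m. Y i ^ k * ((if k = j then 1 else 0) + (if Suc k = j then - Y 0 else 0)))"
    using assms
    by (simp add: vandermonde_mat_def unit_bidiagonal_mat_def scalar_prod_def atLeast0LessThan)
  also have "\<dots> = (\<Sum>k<m. if k = j then Y i ^ k else 0) + (\<Sum>k<m. if Suc k = j then - Y 0 * Y i ^ k else 0)"
    unfolding sum.distrib[symmetric] by (rule sum.cong) auto
  also have "(\<Sum>k<m. if Suc k = j then - Y 0 * Y i ^ k else 0) = (if j = 0 then 0 else - Y 0 * Y i ^ (j - 1))"
    using assms by (cases j) (auto simp: sum.delta' simp del: sum.lessThan_Suc)
  finally show ?thesis
    using assms by (cases j) (simp_all add: algebra_simps)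
qed

lemma mat_delete_vandermonde_mat_mult_unit_bidiagonal:
  "mat_delete (vandermonde_mat (Suc m) Y * unit_bidiagonal_mat (Suc m) (Y 0)) 0 0 =
    mat_diag m (\<lambda>j. Y (Suc j) - Y 0) * vandermonde_mat m (\<lambda>i. Y (Suc i))"
  (is "mat_delete ?A 0 0 = ?B")
proof (rule eq_matI)
  have B: "?B = mat m m (\<lambda>(i, j). (Y (Suc i) - Y 0) * Y (Suc i) ^ j)"
    by (subst mat_diag_mult_left[of _ m m]) (auto simp: vandermonde_mat_def)
  fix i j assume "i < dim_row ?B" "j < dim_col ?B"
  then have "i < m" "j < m" by (simp_all add: B)
  then have "mat_delete ?A 0 0 $$ (i, j) = ?A $$ (Suc i, Suc j)"
    using vandermonde_mat_carrier[of "Suc m" Y] unit_bidiagonal_mat_carrier[of "Suc m" "Y 0"]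
    by (simp add: mat_delete_def)
  also have "\<dots> = ?B $$ (i, j)"
    using \<open>i < m\<close> \<open>j < m\<close> vandermonde_mat_mult_unit_bidiagonal[of "Suc i" "Suc m" "Suc j" Y]
    by (simp add: B mult.commute)
  finally show "mat_delete ?A 0 0 $$ (i, j) = ?B $$ (i, j)" .
qed (simp_all add: mat_diag_def vandermonde_mat_def unit_bidiagonal_mat_def)

lemma det_vandermonde_mat: "det (vandermonde_mat m Y) = vandermonde m Y"
proof (induction m arbitrary: Y)
  case 0
  then show ?case by (simp add: vandermonde_mat_def vandermonde_def det_def)
next
  case (Suc m)
  let ?A = "vandermonde_mat (Suc m) Y * unit_bidiagonal_mat (Suc m) (Y 0)"
  have A: "?A \<in> carrier_mat (Suc m) (Suc m)"
    by (rule mult_carrier_mat[OF vandermonde_mat_carrier unit_bidiagonal_mat_carrier])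
  have "det ?A = det (vandermonde_mat (Suc m) Y) * det (unit_bidiagonal_mat (Suc m) (Y 0))"
    by (rule det_mult[OF vandermonde_mat_carrier unit_bidiagonal_mat_carrier])
  then have "det (vandermonde_mat (Suc m) Y) = det ?A"
    by (simp add: det_unit_bidiagonal_mat)
  also have "\<dots> = (\<Sum>j<Suc m. ?A $$ (0, j) * cofactor ?A 0 j)"
    by (rule laplace_expansion_row[OF A]) simp
  also have "\<dots> = det (mat_delete ?A 0 0)"
    by (subst sum.lessThan_Suc_shift) (simp add: vandermonde_mat_mult_unit_bidiagonal cofactor_def)
  also have "\<dots> = (\<Prod>j<m. Y (Suc j) - Y 0) * vandermonde m (\<lambda>i. Y (Suc i))"
    unfolding mat_delete_vandermonde_mat_mult_unit_bidiagonal
    by (subst det_mult[of _ m]) (auto simp: det_mat_diag Suc.IH vandermonde_mat_carrier)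
  finally show ?case by (simp add: vandermonde_Suc)
qed

lemma vandermonde_eq_sum_permutations:
  "vandermonde m Y = (\<Sum>\<sigma> | \<sigma> permutes {..<m}. of_int (sign \<sigma>) * (\<Prod>b<m. Y b ^ \<sigma> b))"
proof -
  have "vandermonde m Y =
      (\<Sum>\<sigma> | \<sigma> permutes {0..<m}. of_int (sign \<sigma>) * (\<Prod>b=0..<m. vandermonde_mat m Y $$ (b, \<sigma> b)))"
    unfolding det_vandermonde_mat[symmetric] by (rule det_def') (simp add: vandermonde_mat_def)
  also have "\<dots> = (\<Sum>\<sigma> | \<sigma> permutes {..<m}. of_int (sign \<sigma>) * (\<Prod>b<m. Y b ^ \<sigma> b))"
    unfolding atLeast0LessThan
    by (intro sum.cong refl arg_cong2[where f="(*)"] prod.cong)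
      (auto simp: vandermonde_mat_def permutes_in_image[of _ "{..<m}", simplified])
  finally show ?thesis .
qed

lemma prod_lessThan_double: "(\<Prod>p<2*(n::nat). F p) = (\<Prod>i<n. F (2*i) * F (2*i+1))"
  by (induction n) (auto simp: algebra_simps)

lemma sum_lessThan_double: "(\<Sum>p<2*(n::nat). F p) = (\<Sum>i<n. F (2*i) + F (2*i+1))"
  by (induction n) (auto simp: algebra_simps)

lemma vandermonde_double:
  "vandermonde (2*n) Y = (\<Prod>i<n. Y (2*i+1) - Y (2*i)) *
    (\<Prod>i<n. \<Prod>j<i. (Y (2*i) - Y (2*j)) * (Y (2*i) - Y (2*j+1)) *
      ((Y (2*i+1) - Y (2*j)) * (Y (2*i+1) - Y (2*j+1))))"
proof (induction n)
  case 0
  then show ?case by (simp add: vandermonde_def)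
next
  case (Suc n)
  have "vandermonde (2 * Suc n) Y = vandermonde (2*n) Y * (\<Prod>a<2*n. Y (2*n) - Y a) *
      ((Y (2*n+1) - Y (2*n)) * (\<Prod>a<2*n. Y (2*n+1) - Y a))"
    by (simp add: vandermonde_def mult_ac)
  then show ?case
    unfolding Suc.IH prod_lessThan_double prod.lessThan_Suc[of _ n] prod.distrib
    by (simp only: mult_ac)
qed

section \<open>Pfaffian sums and their cofactors\<close>

text \<open>For antisymmetric \<open>h\<close>, \<open>pfaffian_sum h n\<close> is \<open>2^n n!\<close> times the Pfaffian of
  \<open>(h j k)\<^sub>j\<^sub>,\<^sub>k\<^sub><\<^sub>2\<^sub>n\<close>; for general \<open>h\<close> it is the sum produced by de Bruijn's
  integration formula.\<close>

definition pfaffian_term :: "(nat \<Rightarrow> nat \<Rightarrow> 'a::comm_ring_1) \<Rightarrow> nat \<Rightarrow> (nat \<Rightarrow> nat) \<Rightarrow> 'a" where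
  "pfaffian_term h n \<sigma> = of_int (sign \<sigma>) * (\<Prod>i<n. h (\<sigma> (2*i)) (\<sigma> (2*i+1)))"

definition pfaffian_sum :: "(nat \<Rightarrow> nat \<Rightarrow> 'a::comm_ring_1) \<Rightarrow> nat \<Rightarrow> 'a" where
  "pfaffian_sum h n = (\<Sum>\<sigma> | \<sigma> permutes {..<2*n}. pfaffian_term h n \<sigma>)"

definition pfaffian_sum_at :: "(nat \<Rightarrow> nat \<Rightarrow> 'a::comm_ring_1) \<Rightarrow> nat \<Rightarrow> nat \<Rightarrow> nat \<Rightarrow> 'a" where
  "pfaffian_sum_at h n p a =
    (\<Sum>\<sigma> | \<sigma> permutes {..<2*n}. if \<sigma> p = a then pfaffian_term h n \<sigma> else 0)"

definition pair_swap :: "nat \<Rightarrow> nat \<Rightarrow> nat" where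
  "pair_swap i = Transposition.transpose 0 (2*i) \<circ> Transposition.transpose 1 (2*i+1)"

lemma permutes_lessThan_less: "\<sigma> permutes {..<n} \<Longrightarrow> b < n \<Longrightarrow> \<sigma> b < n"
  by (metis lessThan_iff permutes_in_image)

lemma sum_permutes_preimage:
  fixes n :: nat
  assumes "\<sigma> permutes {..<n}" "a < n"
  shows "(\<Sum>p<n. if \<sigma> p = a then x else 0) = x"
proof -
  obtain p0 where "p0 < n" "\<sigma> p0 = a"
    using assms permutes_image[OF assms(1)] by (metis imageE lessThan_iff)
  then have "(\<Sum>p<n. if \<sigma> p = a then x else 0) = (\<Sum>p<n. if p = p0 then x else 0)"
    using permutes_inj[OF assms(1)] by (intro sum.cong) (auto dest: injD)
  also have "\<dots> = x" using \<open>p0 < n\<close> by simp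
  finally show ?thesis .
qed

lemma pair_swap_even: "pair_swap i (2*k) = 2 * Transposition.transpose 0 i k"
  unfolding pair_swap_def by (auto simp: Transposition.transpose_def; presburger)

lemma pair_swap_odd: "pair_swap i (2*k+1) = 2 * Transposition.transpose 0 i k + 1"
  unfolding pair_swap_def by (auto simp: Transposition.transpose_def; presburger)

lemma pair_swap_pair_swap [simp]: "pair_swap i (pair_swap i x) = x"
  unfolding pair_swap_def by (auto simp: Transposition.transpose_def)

lemma permutation_pair_swap: "permutation (pair_swap i)"
  unfolding pair_swap_def by (intro permutation_compose permutation_swap_id)

lemma permutes_comp_pair_swap:
  "i < n \<Longrightarrow> \<sigma> permutes {..<2*n} \<Longrightarrow> \<sigma> \<circ> pair_swap i permutes {..<2*n}"
  unfolding pair_swap_def by (auto intro!: permutes_compose permutes_swap_id)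

lemma sign_pair_swap: "sign (pair_swap i) = 1"
proof -
  have "sign (pair_swap i) = sign (Transposition.transpose (0::nat) (2*i)) * sign (Transposition.transpose (1::nat) (2*i+1))"
    unfolding pair_swap_def by (rule sign_compose) (rule permutation_swap_id)+
  also have "\<dots> = 1" by (cases "i = 0") (auto simp: sign_swap_id)
  finally show ?thesis .
qed

lemma pfaffian_term_comp_pair_swap:
  assumes "i < n" "\<sigma> permutes {..<2*n}"
  shows "pfaffian_term h n (\<sigma> \<circ> pair_swap i) = pfaffian_term h n \<sigma>"
proof -
  have "sign (\<sigma> \<circ> pair_swap i) = sign \<sigma>"
    using permutes_imp_permutation[OF _ assms(2)]
    by (simp add: sign_compose sign_pair_swap permutation_pair_swap)
  moreover have "(\<Prod>k<n. h ((\<sigma> \<circ> pair_swap i) (2*k)) ((\<sigma> \<circ> pair_swap i) (2*k+1)))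
      = (\<Prod>k<n. (\<lambda>k. h (\<sigma> (2*k)) (\<sigma> (2*k+1))) (Transposition.transpose 0 i k))"
    using pair_swap_odd[of i] by (simp add: pair_swap_even)
  moreover have "\<dots> = (\<Prod>k<n. h (\<sigma> (2*k)) (\<sigma> (2*k+1)))"
    using prod.permute[of "Transposition.transpose 0 i" "{..<n}" "\<lambda>k. h (\<sigma> (2*k)) (\<sigma> (2*k+1))"] assms
    by (simp add: permutes_swap_id comp_def)
  ultimately show ?thesis unfolding pfaffian_term_def by simp
qed

lemma pfaffian_sum_at_pair:
  assumes "i < n"
  shows "pfaffian_sum_at h n (2*i) a = pfaffian_sum_at h n 0 a"
    and "pfaffian_sum_at h n (2*i+1) a = pfaffian_sum_at h n 1 a"
proof -
  have "pair_swap i 0 = 2*i" and "pair_swap i (Suc 0) = Suc (2*i)"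
    using pair_swap_even[of i 0] pair_swap_odd[of i 0] by (auto simp: Transposition.transpose_def)
  note facts = this assms permutes_comp_pair_swap[unfolded comp_def]
    pfaffian_term_comp_pair_swap[unfolded comp_def]
  show "pfaffian_sum_at h n (2*i) a = pfaffian_sum_at h n 0 a"
    unfolding pfaffian_sum_at_def
    by (rule sum.reindex_bij_witness[where i="\<lambda>\<sigma>. \<sigma> \<circ> pair_swap i" and j="\<lambda>\<sigma>. \<sigma> \<circ> pair_swap i"])
      (use facts in \<open>auto simp: comp_def\<close>)
  show "pfaffian_sum_at h n (2*i+1) a = pfaffian_sum_at h n 1 a"
    unfolding pfaffian_sum_at_def
    by (rule sum.reindex_bij_witness[where i="\<lambda>\<sigma>. \<sigma> \<circ> pair_swap i" and j="\<lambda>\<sigma>. \<sigma> \<circ> pair_swap i"])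
      (use facts in \<open>auto simp: comp_def\<close>)
qed

lemma pfaffian_sum_eq_sum_at:
  assumes "a < 2*n"
  shows "pfaffian_sum h n = (\<Sum>p<2*n. pfaffian_sum_at h n p a)"
proof -
  have "pfaffian_sum h n = (\<Sum>\<sigma> | \<sigma> permutes {..<2*n}. \<Sum>p<2*n. if \<sigma> p = a then pfaffian_term h n \<sigma> else 0)"
    unfolding pfaffian_sum_def by (intro sum.cong refl) (simp add: sum_permutes_preimage assms)
  also have "\<dots> = (\<Sum>p<2*n. pfaffian_sum_at h n p a)"
    unfolding pfaffian_sum_at_def by (rule sum.swap)
  finally show ?thesis .
qed

lemma pfaffian_sum_eq_first_pair:
  assumes "a < 2*n"
  shows "pfaffian_sum h n = of_nat n * (pfaffian_sum_at h n 0 a + pfaffian_sum_at h n 1 a)"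
proof -
  have "pfaffian_sum h n = (\<Sum>i<n. pfaffian_sum_at h n (2*i) a + pfaffian_sum_at h n (2*i+1) a)"
    unfolding pfaffian_sum_eq_sum_at[OF assms] by (rule sum_lessThan_double)
  also have "\<dots> = (\<Sum>i<n. pfaffian_sum_at h n 0 a + pfaffian_sum_at h n 1 a)"
    by (rule sum.cong) (auto simp: pfaffian_sum_at_pair(1) pfaffian_sum_at_pair(2)[simplified])
  finally show ?thesis by simp
qed

text \<open>Composing with the transposition of \<open>a\<close> and \<open>c\<close> is a sign-reversing involution.\<close>

lemma pfaffian_sum_identify_indices:
  fixes l :: "nat \<Rightarrow> nat \<Rightarrow> 'a::{idom, ring_char_0}"
  assumes "a < 2*n" "c < 2*n" "a \<noteq> c"
  shows "pfaffian_sum (\<lambda>p q. l (if p = a then c else p) (if q = a then c else q)) n = 0"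
proof -
  let ?f = "\<lambda>p. if p = a then c else p"
  let ?h = "\<lambda>p q. l (?f p) (?f q)"
  let ?t = "Transposition.transpose a c"
  have f_t: "?f (?t x) = ?f x" for x by (auto simp: Transposition.transpose_def)
  have t_perm: "\<sigma> permutes {..<2*n} \<Longrightarrow> ?t \<circ> \<sigma> permutes {..<2*n}" for \<sigma>
    using assms by (auto intro!: permutes_compose permutes_swap_id)
  have term_t: "pfaffian_term ?h n (?t \<circ> \<sigma>) = - pfaffian_term ?h n \<sigma>" if "\<sigma> permutes {..<2*n}" for \<sigma>
  proof -
    have "sign (?t \<circ> \<sigma>) = - sign \<sigma>"
      using assms permutes_imp_permutation[OF _ that]
      by (simp add: sign_compose permutation_swap_id sign_swap_id)
    moreover have "(\<Prod>i<n. ?h ((?t \<circ> \<sigma>) (2*i)) ((?t \<circ> \<sigma>) (2*i+1))) = (\<Prod>i<n. ?h (\<sigma> (2*i)) (\<sigma> (2*i+1)))"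
      by (simp only: comp_apply f_t)
    ultimately show ?thesis unfolding pfaffian_term_def by simp
  qed
  have "pfaffian_sum ?h n = (\<Sum>\<sigma> | \<sigma> permutes {..<2*n}. - pfaffian_term ?h n \<sigma>)"
    unfolding pfaffian_sum_def
    by (rule sum.reindex_bij_witness[where i="\<lambda>\<sigma>. ?t \<circ> \<sigma>" and j="\<lambda>\<sigma>. ?t \<circ> \<sigma>"])
      (auto simp: t_perm term_t o_assoc[symmetric] transpose_comp_involutory)
  also have "\<dots> = - pfaffian_sum ?h n" by (simp add: pfaffian_sum_def sum_negf)
  finally show ?thesis by simp
qed

definition pfaffian_tail :: "(nat \<Rightarrow> nat \<Rightarrow> 'a::comm_ring_1) \<Rightarrow> nat \<Rightarrow> (nat \<Rightarrow> nat) \<Rightarrow> 'a" where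
  "pfaffian_tail l m \<sigma> = (\<Prod>i<m. l (\<sigma> (2*i+2)) (\<sigma> (2*i+3)))"

definition pfaffian_cofactor :: "(nat \<Rightarrow> nat \<Rightarrow> 'a::comm_ring_1) \<Rightarrow> nat \<Rightarrow> nat \<Rightarrow> nat \<Rightarrow> 'a" where
  "pfaffian_cofactor l m b a =
    (\<Sum>\<sigma> | \<sigma> permutes {..<2 * Suc m}.
      if \<sigma> 0 = b \<and> \<sigma> 1 = a then of_int (sign \<sigma>) * pfaffian_tail l m \<sigma> else 0)"

lemma pfaffian_term_Suc:
  "pfaffian_term h (Suc m) \<sigma> = of_int (sign \<sigma>) * h (\<sigma> 0) (\<sigma> 1) * pfaffian_tail h m \<sigma>"
  unfolding pfaffian_term_def pfaffian_tail_def prod.lessThan_Suc_shift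
  by (simp add: algebra_simps numeral_3_eq_3)

lemma pfaffian_tail_identify_indices:
  assumes "\<sigma> permutes {..<2 * Suc m}" "\<sigma> 0 = a \<or> \<sigma> 1 = a"
  shows "pfaffian_tail (\<lambda>p q. l (if p = a then c else p) (if q = a then c else q)) m \<sigma> =
    pfaffian_tail l m \<sigma>"
proof -
  have "\<sigma> k \<noteq> a" if "k \<ge> 2" for k
    using assms(2) that injD[OF permutes_inj[OF assms(1)], of k 0] injD[OF permutes_inj[OF assms(1)], of k 1]
    by auto
  then show ?thesis unfolding pfaffian_tail_def by (intro prod.cong refl) auto
qed

lemma sum_mult_pfaffian_cofactor:
  "(\<Sum>b<2 * Suc m. g b * pfaffian_cofactor l m b a) =
    (\<Sum>\<sigma> | \<sigma> permutes {..<2 * Suc m}.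
      if \<sigma> 1 = a then of_int (sign \<sigma>) * g (\<sigma> 0) * pfaffian_tail l m \<sigma> else 0)"
proof -
  have "(\<Sum>b<2 * Suc m. g b * pfaffian_cofactor l m b a) =
      (\<Sum>b<2 * Suc m. \<Sum>\<sigma> | \<sigma> permutes {..<2 * Suc m}.
        if \<sigma> 0 = b \<and> \<sigma> 1 = a then of_int (sign \<sigma>) * g b * pfaffian_tail l m \<sigma> else 0)"
    unfolding pfaffian_cofactor_def sum_distrib_left by (intro sum.cong refl) (auto simp: algebra_simps)
  also have "\<dots> = (\<Sum>\<sigma> | \<sigma> permutes {..<2 * Suc m}. \<Sum>b<2 * Suc m.
        if \<sigma> 0 = b \<and> \<sigma> 1 = a then of_int (sign \<sigma>) * g b * pfaffian_tail l m \<sigma> else 0)"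
    by (rule sum.swap)
  also have "\<dots> = (\<Sum>\<sigma> | \<sigma> permutes {..<2 * Suc m}.
      if \<sigma> 1 = a then of_int (sign \<sigma>) * g (\<sigma> 0) * pfaffian_tail l m \<sigma> else 0)"
  proof (intro sum.cong refl)
    fix \<sigma> assume "\<sigma> \<in> {\<sigma>. \<sigma> permutes {..<2 * Suc m}}"
    then have "\<sigma> 0 < 2 * Suc m" by (simp add: permutes_lessThan_less)
    then show "(\<Sum>b<2 * Suc m. if \<sigma> 0 = b \<and> \<sigma> 1 = a then of_int (sign \<sigma>) * g b * pfaffian_tail l m \<sigma> else 0) =
        (if \<sigma> 1 = a then of_int (sign \<sigma>) * g (\<sigma> 0) * pfaffian_tail l m \<sigma> else 0)"
      by (cases "\<sigma> 1 = a") (simp_all add: sum.delta)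
  qed
  finally show ?thesis .
qed

lemma pfaffian_sum_at_identify_indices:
  fixes l :: "nat \<Rightarrow> nat \<Rightarrow> 'a::comm_ring_1" and a c :: nat
  defines "h \<equiv> \<lambda>p q. l (if p = a then c else p) (if q = a then c else q)"
  shows "pfaffian_sum_at h (Suc m) 0 a =
      (\<Sum>\<sigma> | \<sigma> permutes {..<2 * Suc m}.
        if \<sigma> 0 = a then of_int (sign \<sigma>) * l c (\<sigma> 1) * pfaffian_tail l m \<sigma> else 0)"
    and "pfaffian_sum_at h (Suc m) 1 a =
      (\<Sum>\<sigma> | \<sigma> permutes {..<2 * Suc m}.
        if \<sigma> 1 = a then of_int (sign \<sigma>) * l (\<sigma> 0) c * pfaffian_tail l m \<sigma> else 0)"
proof -
  have distinct: "\<sigma> 0 \<noteq> \<sigma> 1" if "\<sigma> permutes {..<2 * Suc m}" for \<sigma>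
    using injD[OF permutes_inj[OF that], of 0 1] by auto
  have first: "pfaffian_term h (Suc m) \<sigma> = of_int (sign \<sigma>) * l c (\<sigma> 1) * pfaffian_tail l m \<sigma>"
    if "\<sigma> permutes {..<2 * Suc m}" "\<sigma> 0 = a" for \<sigma>
    using that distinct[OF that(1)] pfaffian_tail_identify_indices[of \<sigma> m a l c]
    by (simp add: pfaffian_term_Suc h_def)
  have second: "pfaffian_term h (Suc m) \<sigma> = of_int (sign \<sigma>) * l (\<sigma> 0) c * pfaffian_tail l m \<sigma>"
    if "\<sigma> permutes {..<2 * Suc m}" "\<sigma> 1 = a" for \<sigma>
    using that distinct[OF that(1)] pfaffian_tail_identify_indices[of \<sigma> m a l c]
    by (simp add: pfaffian_term_Suc h_def)
  show "pfaffian_sum_at h (Suc m) 0 a = (\<Sum>\<sigma> | \<sigma> permutes {..<2 * Suc m}.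
      if \<sigma> 0 = a then of_int (sign \<sigma>) * l c (\<sigma> 1) * pfaffian_tail l m \<sigma> else 0)"
    unfolding pfaffian_sum_at_def by (intro sum.cong refl) (simp add: first)
  show "pfaffian_sum_at h (Suc m) 1 a = (\<Sum>\<sigma> | \<sigma> permutes {..<2 * Suc m}.
      if \<sigma> 1 = a then of_int (sign \<sigma>) * l (\<sigma> 0) c * pfaffian_tail l m \<sigma> else 0)"
    unfolding pfaffian_sum_at_def by (intro sum.cong refl) (simp add: second)
qed

lemma sum_swap_first_pair:
  assumes "finite S" "0 \<in> S" "1 \<in> S"
  shows "(\<Sum>\<sigma> | \<sigma> permutes S.
      if \<sigma> 0 = a then of_int (sign \<sigma>) * g (\<sigma> 1) * pfaffian_tail l m \<sigma> else 0) =
   - (\<Sum>\<sigma> | \<sigma> permutes S.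
      if \<sigma> 1 = a then of_int (sign \<sigma>) * g (\<sigma> 0) * pfaffian_tail l m \<sigma> else 0)"
proof -
  let ?t = "Transposition.transpose (0::nat) (Suc 0)"
  have t_perm: "\<sigma> \<circ> ?t permutes S" if "\<sigma> permutes S" for \<sigma>
    using assms that by (auto intro!: permutes_compose permutes_swap_id)
  have sign_t: "sign (\<sigma> \<circ> ?t) = - sign \<sigma>" if "\<sigma> permutes S" for \<sigma>
    using permutes_imp_permutation[OF assms(1) that]
    by (simp add: sign_compose permutation_swap_id sign_swap_id)
  have tail_t: "pfaffian_tail l m (\<sigma> \<circ> ?t) = pfaffian_tail l m \<sigma>" for \<sigma>
    unfolding pfaffian_tail_def by (intro prod.cong refl) (auto simp: Transposition.transpose_def)
  have "(\<Sum>\<sigma> | \<sigma> permutes S.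
      if \<sigma> 0 = a then of_int (sign \<sigma>) * g (\<sigma> 1) * pfaffian_tail l m \<sigma> else 0) =
    (\<Sum>\<sigma> | \<sigma> permutes S.
      - (if \<sigma> 1 = a then of_int (sign \<sigma>) * g (\<sigma> 0) * pfaffian_tail l m \<sigma> else 0))"
    by (rule sum.reindex_bij_witness[where i="\<lambda>\<sigma>. \<sigma> \<circ> ?t" and j="\<lambda>\<sigma>. \<sigma> \<circ> ?t"])
      (auto simp: t_perm sign_t tail_t o_assoc[symmetric] transpose_comp_involutory)
  then show ?thesis by (simp add: sum_negf)
qed

text \<open>Up to the factor \<open>-pfaffian_sum l (Suc m) / Suc m\<close>, the cofactors form the inverse of
  the antisymmetrised matrix \<open>l c b - l b c\<close>: expanding along the pair containing \<open>a\<close> after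
  replacing \<open>a\<close> by \<open>c\<close> in \<open>l\<close> gives the Pfaffian sum with two equal indices, which vanishes
  unless \<open>c = a\<close>.\<close>

lemma antisym_mult_pfaffian_cofactor:
  fixes l :: "nat \<Rightarrow> nat \<Rightarrow> 'a::{idom, ring_char_0}"
  assumes "a < 2 * Suc m" "c < 2 * Suc m"
  shows "of_nat (Suc m) * (\<Sum>b<2 * Suc m. (l c b - l b c) * pfaffian_cofactor l m b a) =
    - (if c = a then pfaffian_sum l (Suc m) else 0)"
proof -
  define h where "h = (\<lambda>p q. l (if p = a then c else p) (if q = a then c else q))"
  have "(\<Sum>b<2 * Suc m. (l c b - l b c) * pfaffian_cofactor l m b a) =
      (\<Sum>b<2 * Suc m. l c b * pfaffian_cofactor l m b a) - (\<Sum>b<2 * Suc m. l b c * pfaffian_cofactor l m b a)"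
    by (simp add: algebra_simps sum_subtractf)
  also have "\<dots> = - (pfaffian_sum_at h (Suc m) 0 a + pfaffian_sum_at h (Suc m) 1 a)"
    unfolding sum_mult_pfaffian_cofactor h_def pfaffian_sum_at_identify_indices
    using sum_swap_first_pair[of "{..<2 * Suc m}" a "l c" l m] by simp
  finally have "of_nat (Suc m) * (\<Sum>b<2 * Suc m. (l c b - l b c) * pfaffian_cofactor l m b a) =
      - pfaffian_sum h (Suc m)"
    unfolding pfaffian_sum_eq_first_pair[OF assms(1)] by (simp only: mult_minus_right)
  moreover have "pfaffian_sum h (Suc m) = (if c = a then pfaffian_sum l (Suc m) else 0)"
  proof (cases "c = a")
    case True
    then have "h = l" by (auto simp: h_def)
    then show ?thesis using True by simp
  next
    case False
    then show ?thesis
      using pfaffian_sum_identify_indices[OF assms, of l] by (simp add: h_def)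
  qed
  ultimately show ?thesis by simp
qed

lemma sum_powers_pfaffian_cofactor:
  "(\<Sum>j<2 * Suc m. \<Sum>k<2 * Suc m. u ^ j * pfaffian_cofactor l m j k * v ^ k) =
    (\<Sum>\<sigma> | \<sigma> permutes {..<2 * Suc m}. of_int (sign \<sigma>) * u ^ \<sigma> 0 * v ^ \<sigma> 1 * pfaffian_tail l m \<sigma>)"
proof -
  let ?t = "\<lambda>\<sigma> j k. if \<sigma> 0 = j \<and> \<sigma> 1 = k then of_int (sign \<sigma>) * u ^ j * v ^ k * pfaffian_tail l m \<sigma> else 0"
  have "(\<Sum>j<2 * Suc m. \<Sum>k<2 * Suc m. u ^ j * pfaffian_cofactor l m j k * v ^ k) =
      (\<Sum>j<2 * Suc m. \<Sum>k<2 * Suc m. \<Sum>\<sigma> | \<sigma> permutes {..<2 * Suc m}. ?t \<sigma> j k)"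
    unfolding pfaffian_cofactor_def sum_distrib_left sum_distrib_right by (intro sum.cong refl) auto
  also have "\<dots> = (\<Sum>\<sigma> | \<sigma> permutes {..<2 * Suc m}. \<Sum>j<2 * Suc m. \<Sum>k<2 * Suc m. ?t \<sigma> j k)"
    by (simp only: sum.swap[of _ "{\<sigma>. \<sigma> permutes {..<2 * Suc m}}"])
  also have "\<dots> = (\<Sum>\<sigma> | \<sigma> permutes {..<2 * Suc m}. of_int (sign \<sigma>) * u ^ \<sigma> 0 * v ^ \<sigma> 1 * pfaffian_tail l m \<sigma>)"
  proof (intro sum.cong refl)
    fix \<sigma> assume "\<sigma> \<in> {\<sigma>. \<sigma> permutes {..<2 * Suc m}}"
    then have "\<sigma> 0 < 2 * Suc m" "\<sigma> 1 < 2 * Suc m" by (simp_all add: permutes_lessThan_less)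
    have "(\<Sum>j<2 * Suc m. \<Sum>k<2 * Suc m. ?t \<sigma> j k) = (\<Sum>j<2 * Suc m.
        if \<sigma> 0 = j then of_int (sign \<sigma>) * u ^ j * v ^ \<sigma> 1 * pfaffian_tail l m \<sigma> else 0)"
      using \<open>\<sigma> 1 < 2 * Suc m\<close> by (intro sum.cong refl) (simp add: sum.delta)
    then show "(\<Sum>j<2 * Suc m. \<Sum>k<2 * Suc m. ?t \<sigma> j k) =
        of_int (sign \<sigma>) * u ^ \<sigma> 0 * v ^ \<sigma> 1 * pfaffian_tail l m \<sigma>"
      using \<open>\<sigma> 0 < 2 * Suc m\<close> by (simp add: sum.delta)
  qed
  finally show ?thesis .
qed

lemma antisym_mat_mult_pfaffian_cofactor_mat:
  fixes l :: "nat \<Rightarrow> nat \<Rightarrow> 'a::field_char_0" and m :: nat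
  defines "n \<equiv> 2 * Suc m"
  shows "mat n n (\<lambda>(j,k). l j k - l k j) * mat n n (\<lambda>(b,a). pfaffian_cofactor l m b a) =
    (- pfaffian_sum l (Suc m) / of_nat (Suc m)) \<cdot>\<^sub>m 1\<^sub>m n"
proof (rule eq_matI)
  fix c k assume "c < dim_row ((- pfaffian_sum l (Suc m) / of_nat (Suc m)) \<cdot>\<^sub>m 1\<^sub>m n)"
    and "k < dim_col ((- pfaffian_sum l (Suc m) / of_nat (Suc m)) \<cdot>\<^sub>m 1\<^sub>m n)"
  then have "c < n" "k < n" by simp_all
  have "of_nat (Suc m) * (\<Sum>b<n. (l c b - l b c) * pfaffian_cofactor l m b k) =
      - (if c = k then pfaffian_sum l (Suc m) else 0)"
    using antisym_mult_pfaffian_cofactor[of k m c l] \<open>c < n\<close> \<open>k < n\<close> unfolding n_def by simp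
  then have "(\<Sum>b<n. (l c b - l b c) * pfaffian_cofactor l m b k) =
      - (if c = k then pfaffian_sum l (Suc m) else 0) / of_nat (Suc m)"
    by (simp add: field_simps del: of_nat_Suc)
  then show "(mat n n (\<lambda>(j,k). l j k - l k j) * mat n n (\<lambda>(b,a). pfaffian_cofactor l m b a)) $$ (c, k) =
      ((- pfaffian_sum l (Suc m) / of_nat (Suc m)) \<cdot>\<^sub>m 1\<^sub>m n) $$ (c, k)"
    using \<open>c < n\<close> \<open>k < n\<close> by (simp add: scalar_prod_def atLeast0LessThan)
qed simp_all

lemma mat_inverse_eq_Some:
  fixes A :: "'a::field mat"
  assumes A: "A \<in> carrier_mat n n" and inv: "invertible_mat A"
  obtains B where "mat_inverse A = Some B" "B * A = 1\<^sub>m n" "B \<in> carrier_mat n n"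
proof (cases "mat_inverse A")
  case None
  obtain B where AB: "A * B = 1\<^sub>m (dim_row A)" and BA: "B * A = 1\<^sub>m (dim_row B)"
    using inv unfolding invertible_mat_def inverts_mat_def by blast
  have "dim_row B = n" "dim_col B = n"
    using arg_cong[OF BA, of dim_col] arg_cong[OF AB, of dim_col] A by auto
  then have "A \<in> Units (ring_mat TYPE('a) n ())"
    unfolding Units_def ring_mat_def using A AB BA by (auto intro!: bexI[of _ B])
  moreover have "A \<notin> Units (ring_mat TYPE('a) n ())" by (rule mat_inverse(1)[OF A None])
  ultimately show ?thesis by blast
next
  case (Some B)
  then show ?thesis using mat_inverse(2)[OF A Some] that by blast
qed

lemma pfaffian_sum_mult_kappa_over:
  assumes skew: "\<And>j k. skew_moment x y j k = l j k - l k j"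
    and inv: "invertible_mat (skew_moment_mat (Suc m) x y)"
  shows "pfaffian_sum l (Suc m) * kappa_over (Suc m) u v x y =
    - of_nat (Suc m) * (\<Sum>j<2 * Suc m. \<Sum>k<2 * Suc m. u ^ j * pfaffian_cofactor l m j k * v ^ k)"
proof -
  define n where "n = 2 * Suc m"
  let ?M = "skew_moment_mat (Suc m) x y"
  let ?Q = "mat n n (\<lambda>(b,a). pfaffian_cofactor l m b a)"
  let ?c = "- pfaffian_sum l (Suc m) / of_nat (Suc m)"
  have M: "?M \<in> carrier_mat n n" by (simp add: skew_moment_mat_def n_def)
  obtain B where B_inv: "mat_inverse ?M = Some B" and BM: "B * ?M = 1\<^sub>m n" and B: "B \<in> carrier_mat n n"
    using mat_inverse_eq_Some[OF M inv] by blast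
  have MQ: "?M * ?Q = ?c \<cdot>\<^sub>m 1\<^sub>m n"
    unfolding skew_moment_mat_def skew n_def by (rule antisym_mat_mult_pfaffian_cofactor_mat)
  have "?Q = (B * ?M) * ?Q" by (simp add: BM)
  also have "\<dots> = B * (?M * ?Q)" by (rule assoc_mult_mat[OF B M, of _ n]) simp
  also have "\<dots> = ?c \<cdot>\<^sub>m B"
    unfolding MQ mult_smult_distrib[OF B one_carrier_mat] using B by simp
  finally have QB: "?Q = ?c \<cdot>\<^sub>m B" .
  have entry: "pfaffian_sum l (Suc m) * B $$ (j, k) = - of_nat (Suc m) * pfaffian_cofactor l m j k"
    if "j < n" "k < n" for j k
  proof -
    have "pfaffian_cofactor l m j k = ?c * B $$ (j, k)"
      using arg_cong[OF QB, of "\<lambda>A. A $$ (j, k)"] that B by simp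
    then show ?thesis by (simp add: field_simps del: of_nat_Suc)
  qed
  have "pfaffian_sum l (Suc m) * kappa_over (Suc m) u v x y =
      (\<Sum>j<n. \<Sum>k<n. u ^ j * (pfaffian_sum l (Suc m) * B $$ (j, k)) * v ^ k)"
    unfolding kappa_over_def Let_def B_inv option.sel n_def[symmetric] sum_distrib_left
    by (simp add: mult_ac)
  also have "\<dots> = (\<Sum>j<n. \<Sum>k<n. u ^ j * (- of_nat (Suc m) * pfaffian_cofactor l m j k) * v ^ k)"
    by (intro sum.cong refl) (simp add: entry del: of_nat_Suc)
  finally show ?thesis
    unfolding n_def by (simp add: sum_distrib_left algebra_simps sum_negf)
qed

section \<open>Integrands as Vandermonde products\<close>

definition interleave :: "(nat \<Rightarrow> 'a) \<Rightarrow> (nat \<Rightarrow> 'a) \<Rightarrow> nat \<Rightarrow> 'a" where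
  "interleave Z Zb b = (if even b then Z (b div 2) else Zb (b div 2))"

lemma interleave_simps [simp]:
  "interleave Z Zb (2*i) = Z i" "interleave Z Zb (2*i+1) = Zb i" "interleave Z Zb (Suc (2*i)) = Zb i"
  by (simp_all add: interleave_def)

lemma vandermonde_interleave:
  "vandermonde (2*n) (interleave Z Zb) = (\<Prod>i<n. Zb i - Z i) *
    (\<Prod>i<n. \<Prod>j<i. (Z i - Z j) * (Z i - Zb j) * ((Zb i - Z j) * (Zb i - Zb j)))"
  by (simp add: vandermonde_double)

lemma vandermonde_interleave_eq_sum_permutations:
  "vandermonde (2*n) (interleave Z Zb) =
    (\<Sum>\<sigma> | \<sigma> permutes {..<2*n}. of_int (sign \<sigma>) * (\<Prod>i<n. Z i ^ \<sigma> (2*i) * Zb i ^ \<sigma> (2*i+1)))"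
  by (simp add: vandermonde_eq_sum_permutations prod_lessThan_double)

lemma prod_atLeastLessThan_shift: "(\<Prod>l\<in>{k..<n+k::nat}. F l) = (\<Prod>i<n. F (i + k))"
  using prod.shift_bounds_nat_ivl[of F 0 k n] by (simp add: atLeast0LessThan)

definition skew_weight :: "complex \<Rightarrow> complex \<Rightarrow> complex \<Rightarrow> complex" where
  "skew_weight x y w = (w - cnj w) * omega_over w (cnj w) x y"

lemma Z_over_integrand_eq_vandermonde:
  "(\<Prod>k<n. \<Prod>j<k. of_real ((cmod (w j - w k))\<^sup>2 * (cmod (w j - cnj (w k)))\<^sup>2)) *
    (\<Prod>j<n. of_real ((cmod (w j - cnj (w j)))\<^sup>2) * omega_over (w j) (cnj (w j)) x y) =
   vandermonde (2*n) (interleave w (\<lambda>i. cnj (w i))) * (\<Prod>j<n. skew_weight x y (w j))"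
proof -
  have "complex_of_real ((cmod (a - b))\<^sup>2 * (cmod (a - cnj b))\<^sup>2) =
      (b - a) * (b - cnj a) * ((cnj b - a) * (cnj b - cnj a))" for a b
    unfolding of_real_mult complex_norm_square by (simp add: algebra_simps)
  moreover have "complex_of_real ((cmod (a - cnj a))\<^sup>2) * omega_over a (cnj a) x y =
      (cnj a - a) * skew_weight x y a" for a
    unfolding complex_norm_square skew_weight_def by (simp add: algebra_simps)
  ultimately show ?thesis
    unfolding vandermonde_interleave by (simp add: prod.distrib mult_ac)
qed

definition D12_integrand :: "nat \<Rightarrow> complex \<Rightarrow> complex \<Rightarrow> (nat \<Rightarrow> complex) \<Rightarrow> complex" where
  "D12_integrand N z1 z2 w = (\<Prod>l\<in>{3..N}. \<Prod>k\<in>{3..<l}.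
      of_real ((cmod (w l - w k))\<^sup>2 * (cmod (w l - cnj (w k)))\<^sup>2)) *
    (\<Prod>j\<in>{3..N}. of_real ((cmod (z1 - cnj (w j)))\<^sup>2 * (cmod (z2 - cnj (w j)))\<^sup>2) *
      (of_real ((cmod (z1 - w j))\<^sup>2 * (cmod (z2 - w j))\<^sup>2) + (cnj z1 - cnj (w j)) * (z2 - w j)) *
      of_real ((cmod (w j - cnj (w j)))\<^sup>2) * exp (- 2 * of_real ((cmod (w j))\<^sup>2)))"

text \<open>The factor of the \<open>D12\<close> integrand attached to one integration variable is the Vandermonde
  interaction of \<open>t, cnj t\<close> with the points \<open>z2, cnj z1\<close> times the weight
  \<open>omega_over (\<cdot> | z1, cnj z2)\<close>: this is where that weight comes from.\<close>

lemma D12_integrand_factor: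
  "of_real ((cmod (z1 - cnj t))\<^sup>2 * (cmod (z2 - cnj t))\<^sup>2) *
     (of_real ((cmod (z1 - t))\<^sup>2 * (cmod (z2 - t))\<^sup>2) + (cnj z1 - cnj t) * (z2 - t)) *
     of_real ((cmod (t - cnj t))\<^sup>2) * exp (- 2 * of_real ((cmod t)\<^sup>2)) =
   (t - z2) * (t - cnj z1) * ((cnj t - z2) * (cnj t - cnj z1)) * (cnj t - t) *
     skew_weight z1 (cnj z2) t"
proof -
  have exp: "exp (- 2 * (t * cnj t)) = exp (-2 * t * cnj t)" by (simp add: mult.assoc)
  show ?thesis
    unfolding of_real_mult complex_norm_square skew_weight_def omega_over_def
      complex_cnj_diff complex_cnj_cnj exp
    by Groebner_Basis.algebra
qed

abbreviation D12_points :: "complex \<Rightarrow> complex \<Rightarrow> (nat \<Rightarrow> complex) \<Rightarrow> nat \<Rightarrow> complex" where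
  "D12_points z1 z2 w \<equiv> interleave (\<lambda>i. if i = 0 then z2 else w (i + 2))
    (\<lambda>i. if i = 0 then cnj z1 else cnj (w (i + 2)))"

lemma D12_integrand_eq_vandermonde:
  "(cnj z1 - z2) * D12_integrand (Suc (Suc m)) z1 z2 w =
    vandermonde (2 * Suc m) (D12_points z1 z2 w) * (\<Prod>i<m. skew_weight z1 (cnj z2) (w (i + 3)))"
proof -
  have pair: "complex_of_real ((cmod (a - b))\<^sup>2 * (cmod (a - cnj b))\<^sup>2) =
      (a - b) * (a - cnj b) * ((cnj a - b) * (cnj a - cnj b))" for a b
    unfolding of_real_mult complex_norm_square by (simp add: algebra_simps)
  have "{3..Suc (Suc m)} = {3..<m+3}" "\<And>i::nat. {3..<i+3} = {0+3..<i+3}" by auto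
  then have "D12_integrand (Suc (Suc m)) z1 z2 w =
      (\<Prod>i<m. \<Prod>j<i. (w (i+3) - w (j+3)) * (w (i+3) - cnj (w (j+3))) *
        ((cnj (w (i+3)) - w (j+3)) * (cnj (w (i+3)) - cnj (w (j+3))))) *
      (\<Prod>i<m. (w (i+3) - z2) * (w (i+3) - cnj z1) * ((cnj (w (i+3)) - z2) * (cnj (w (i+3)) - cnj z1)) *
        (cnj (w (i+3)) - w (i+3)) * skew_weight z1 (cnj z2) (w (i+3)))"
    unfolding D12_integrand_def D12_integrand_factor pair
    by (simp only: prod_atLeastLessThan_shift prod.shift_bounds_nat_ivl atLeast0LessThan)
  then show ?thesis
    unfolding vandermonde_interleave prod.lessThan_Suc_shift
    by (simp add: prod.distrib numeral_3_eq_3)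
qed

lemma D11_product_eq_vandermonde:
  "(\<Prod>l\<in>{2..N}. \<Prod>j\<in>{2..<l}. (Z j - Z l) * (Zb j - Zb l) * (Z j - Zb l) * (Zb j - Z l)) *
    (\<Prod>l\<in>{2..N}. (Z l - Zb l) * (Zb l - Z l) * f l) =
   vandermonde (2 * (N - 1)) (interleave (\<lambda>i. Z (i + 2)) (\<lambda>i. Zb (i + 2))) *
    (\<Prod>l\<in>{2..N}. (Z l - Zb l) * f l)"
proof -
  have shift: "{2..N} = {0+2..<(N - 1)+2}" "\<And>i::nat. {2..<i+2} = {0+2..<i+2}" by auto
  have "(Z j - Z l) * (Zb j - Zb l) * (Z j - Zb l) * (Zb j - Z l) =
      (Z l - Z j) * (Z l - Zb j) * ((Zb l - Z j) * (Zb l - Zb j))" for j l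
    by (simp add: algebra_simps)
  moreover have "(Z l - Zb l) * (Zb l - Z l) * f l = (Zb l - Z l) * ((Z l - Zb l) * f l)" for l
    by (simp add: mult_ac)
  ultimately show ?thesis
    unfolding vandermonde_interleave shift
    by (simp only: prod_atLeastLessThan_shift prod.shift_bounds_nat_ivl atLeast0LessThan prod.distrib mult_ac)
qed

section \<open>Integrating the Leibniz expansion of the Vandermonde product\<close>

definition weight_moment :: "complex \<Rightarrow> complex \<Rightarrow> nat \<Rightarrow> nat \<Rightarrow> complex" where
  "weight_moment x y j k = (1 / of_real pi) * (\<integral>w. w ^ j * cnj w ^ k * skew_weight x y w \<partial>lborel)"

lemma integrable_monomial_skew_weight: "integrable lborel (\<lambda>w. w ^ a * cnj w ^ b * skew_weight x y w)"
proof -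
  let ?P = "\<lambda>w. w ^ a * cnj w ^ b * ((w - cnj w) * (w - y) * (cnj w - x) * (1 + (w - x) * (cnj w - y)))"
  have "polynomially_bounded ?P" by (intro polynomially_bounded_intros)
  moreover have "continuous_on UNIV ?P" by (intro continuous_intros)
  ultimately have "integrable lborel (\<lambda>w. ?P w * exp (-2 * w * cnj w))"
    by (rule integrable_polynomially_bounded_mult_gauss)
  then show ?thesis
    by (simp add: skew_weight_def omega_over_def mult_ac)
qed

lemma integral_monomial_skew_weight:
  "(\<integral>t. t ^ j * cnj t ^ k * skew_weight x y t \<partial>lborel) = of_real pi * weight_moment x y j k"
  by (simp add: weight_moment_def)

lemma skew_moment_eq_weight_moment: "skew_moment x y j k = weight_moment x y j k - weight_moment x y k j"
proof -
  have "skew_moment x y j k = (1 / of_real pi) *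
      (\<integral>w. w ^ j * cnj w ^ k * skew_weight x y w - w ^ k * cnj w ^ j * skew_weight x y w \<partial>lborel)"
    unfolding skew_moment_def skew_weight_def by (simp add: algebra_simps)
  also have "\<dots> = weight_moment x y j k - weight_moment x y k j"
    unfolding weight_moment_def
    by (subst Bochner_Integration.integral_diff[OF integrable_monomial_skew_weight integrable_monomial_skew_weight])
      (simp add: algebra_simps)
  finally show ?thesis .
qed

lemma (in product_sigma_finite) integral_sum_prod:
  fixes g :: "'s \<Rightarrow> 'i \<Rightarrow> 'a \<Rightarrow> 'b::{real_normed_field, banach, second_countable_topology}"
  assumes "finite S" "finite I" "\<And>s i. s \<in> S \<Longrightarrow> i \<in> I \<Longrightarrow> integrable (M i) (g s i)"
  shows "(\<integral>w. (\<Sum>s\<in>S. c s * (\<Prod>i\<in>I. g s i (w i))) \<partial>Pi\<^sub>M I M) =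
    (\<Sum>s\<in>S. c s * (\<Prod>i\<in>I. integral\<^sup>L (M i) (g s i)))"
proof -
  have "integrable (Pi\<^sub>M I M) (\<lambda>w. \<Prod>i\<in>I. g s i (w i))" if "s \<in> S" for s
    by (rule product_integrable_prod) (use assms that in auto)
  then show ?thesis
    using assms by (simp add: product_integral_prod)
qed

lemma product_sigma_finite_lborel: "product_sigma_finite (\<lambda>_. lborel)"
  by (simp add: product_sigma_finite_def sigma_finite_lborel)

lemmas integral_sum_prod_lborel = product_sigma_finite.integral_sum_prod[OF product_sigma_finite_lborel]

lemma Z_over_eq_pfaffian_sum: "Z_over n x y = pfaffian_sum (weight_moment x y) n"
proof -
  let ?g = "\<lambda>\<sigma> i t. t ^ \<sigma> (2*i) * cnj t ^ \<sigma> (2*i+1) * skew_weight x y t"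
  have integrand: "vandermonde (2*n) (interleave w (\<lambda>i. cnj (w i))) * (\<Prod>j<n. skew_weight x y (w j)) =
      (\<Sum>\<sigma> | \<sigma> permutes {..<2*n}. of_int (sign \<sigma>) * (\<Prod>i<n. ?g \<sigma> i (w i)))" for w
    unfolding vandermonde_interleave_eq_sum_permutations sum_distrib_right
    by (simp add: prod.distrib mult.assoc)
  have "Z_over n x y = (1 / of_real (pi ^ n)) *
      (\<Sum>\<sigma> | \<sigma> permutes {..<2*n}. of_int (sign \<sigma>) * (\<Prod>i<n. \<integral>t. ?g \<sigma> i t \<partial>lborel))"
    unfolding Z_over_def Z_over_integrand_eq_vandermonde integrand
    by (subst integral_sum_prod_lborel) (auto intro: integrable_monomial_skew_weight finite_permutations)
  also have "\<dots> = (1 / of_real (pi ^ n)) * (\<Sum>\<sigma> | \<sigma> permutes {..<2*n}.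
      of_int (sign \<sigma>) * (of_real pi ^ n * (\<Prod>i<n. weight_moment x y (\<sigma> (2*i)) (\<sigma> (2*i+1)))))"
    by (simp add: integral_monomial_skew_weight prod.distrib)
  also have "\<dots> = pfaffian_sum (weight_moment x y) n"
    unfolding pfaffian_sum_def pfaffian_term_def by (simp add: sum_distrib_left algebra_simps)
  finally show ?thesis .
qed

lemma integral_D12_integrand:
  "(cnj z1 - z2) * (\<integral>w. D12_integrand (Suc (Suc m)) z1 z2 w \<partial>PiM {3..Suc (Suc m)} (\<lambda>_. lborel)) =
    of_real pi ^ m * (\<Sum>j<2 * Suc m. \<Sum>k<2 * Suc m.
      z2 ^ j * pfaffian_cofactor (weight_moment z1 (cnj z2)) m j k * cnj z1 ^ k)"
proof -
  let ?I = "{3..Suc (Suc m)}"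
  let ?g = "\<lambda>\<sigma> l t. t ^ \<sigma> (2*l-4) * cnj t ^ \<sigma> (2*l-3) * skew_weight z1 (cnj z2) t"
  let ?c = "\<lambda>\<sigma>. of_int (sign \<sigma>) * z2 ^ \<sigma> 0 * cnj z1 ^ \<sigma> 1"
  have shift: "?I = {3..<m+3}" by auto
  have integrand: "(cnj z1 - z2) * D12_integrand (Suc (Suc m)) z1 z2 w =
      (\<Sum>\<sigma> | \<sigma> permutes {..<2 * Suc m}. ?c \<sigma> * (\<Prod>l\<in>?I. ?g \<sigma> l (w l)))" for w
    unfolding D12_integrand_eq_vandermonde vandermonde_interleave_eq_sum_permutations sum_distrib_right
  proof (intro sum.cong refl)
    fix \<sigma> :: "nat \<Rightarrow> nat"
    have "(\<Prod>i<Suc m. (if i = 0 then z2 else w (i + 2)) ^ \<sigma> (2*i) *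
          (if i = 0 then cnj z1 else cnj (w (i + 2))) ^ \<sigma> (2*i+1)) =
        z2 ^ \<sigma> 0 * cnj z1 ^ \<sigma> 1 * (\<Prod>i<m. w (i+3) ^ \<sigma> (2*i+2) * cnj (w (i+3)) ^ \<sigma> (2*i+3))"
      unfolding prod.lessThan_Suc_shift by (simp add: numeral_3_eq_3)
    moreover have "(\<Prod>l\<in>?I. ?g \<sigma> l (w l)) =
        (\<Prod>i<m. w (i+3) ^ \<sigma> (2*i+2) * cnj (w (i+3)) ^ \<sigma> (2*i+3) * skew_weight z1 (cnj z2) (w (i+3)))"
      unfolding shift prod_atLeastLessThan_shift by (intro prod.cong refl) (simp add: numeral_3_eq_3 algebra_simps)
    ultimately show "of_int (sign \<sigma>) * (\<Prod>i<Suc m. (if i = 0 then z2 else w (i + 2)) ^ \<sigma> (2*i) *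
          (if i = 0 then cnj z1 else cnj (w (i + 2))) ^ \<sigma> (2*i+1)) *
        (\<Prod>i<m. skew_weight z1 (cnj z2) (w (i + 3))) = ?c \<sigma> * (\<Prod>l\<in>?I. ?g \<sigma> l (w l))"
      by (simp only: prod.distrib mult_ac)
  qed
  have "(cnj z1 - z2) * (\<integral>w. D12_integrand (Suc (Suc m)) z1 z2 w \<partial>PiM ?I (\<lambda>_. lborel)) =
      (\<integral>w. (cnj z1 - z2) * D12_integrand (Suc (Suc m)) z1 z2 w \<partial>PiM ?I (\<lambda>_. lborel))"
    by simp
  also have "\<dots> = (\<Sum>\<sigma> | \<sigma> permutes {..<2 * Suc m}. ?c \<sigma> * (\<Prod>l\<in>?I. \<integral>t. ?g \<sigma> l t \<partial>lborel))"
    unfolding integrand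
    by (rule integral_sum_prod_lborel) (auto intro: integrable_monomial_skew_weight finite_permutations)
  also have "\<dots> = of_real pi ^ m * (\<Sum>\<sigma> | \<sigma> permutes {..<2 * Suc m}.
      ?c \<sigma> * pfaffian_tail (weight_moment z1 (cnj z2)) m \<sigma>)"
    unfolding shift prod_atLeastLessThan_shift pfaffian_tail_def sum_distrib_left
    by (intro sum.cong refl)
      (simp only: integral_monomial_skew_weight, simp add: prod.distrib numeral_3_eq_3 algebra_simps)
  finally show ?thesis
    unfolding sum_powers_pfaffian_cofactor .
qed

section \<open>The two expressions for the off-diagonal overlap\<close>

lemma D12_eq_kappa_over:
  assumes inv: "invertible_mat (skew_moment_mat (Suc m) z1 (cnj z2))"
  shows "D12 (Suc (Suc m)) z1 z2 =
    - (of_nat (Suc (Suc m)) * Z_over (Suc m) z1 (cnj z2) / of_real (Zg (Suc (Suc m)))) *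
    of_real ((cmod (z1 - cnj z1))\<^sup>2 * (cmod (z2 - cnj z2))\<^sup>2) * (cnj z2 - z1) *
    exp (- 2 * of_real ((cmod z1)\<^sup>2) - 2 * of_real ((cmod z2)\<^sup>2)) *
    kappa_over (Suc m) z2 (cnj z1) z1 (cnj z2)"
proof -
  let ?N = "Suc (Suc m)"
  let ?I = "\<integral>w. D12_integrand ?N z1 z2 w \<partial>PiM {3..?N} (\<lambda>_. lborel)"
  define S where "S = (\<Sum>j<2 * Suc m. \<Sum>k<2 * Suc m.
    z2 ^ j * pfaffian_cofactor (weight_moment z1 (cnj z2)) m j k * cnj z1 ^ k)"
  let ?A = "complex_of_real ((cmod (z1 - cnj z1))\<^sup>2 * (cmod (z2 - cnj z2))\<^sup>2)"
  let ?E = "exp (- 2 * complex_of_real ((cmod z1)\<^sup>2) - 2 * complex_of_real ((cmod z2)\<^sup>2))"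
  let ?c = "of_nat ?N / complex_of_real (Zg ?N)"
  have Z_kappa: "Z_over (Suc m) z1 (cnj z2) * kappa_over (Suc m) z2 (cnj z1) z1 (cnj z2) = - of_nat (Suc m) * S"
    unfolding Z_over_eq_pfaffian_sum S_def
    by (rule pfaffian_sum_mult_kappa_over[OF skew_moment_eq_weight_moment inv])
  have "D12 ?N z1 z2 = - ?c * of_nat (Suc m) * ?A * (z1 - cnj z2) * ?E * ((cnj z1 - z2) * ?I) / of_real pi ^ m"
    unfolding D12_def D12_integrand_def of_real_mult[of _ "(cmod (z1 - cnj z2))\<^sup>2"] complex_norm_square
    by (simp add: field_simps)
  also have "\<dots> = - ?c * of_nat (Suc m) * ?A * (z1 - cnj z2) * ?E * S"
    unfolding integral_D12_integrand S_def by simp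
  also have "\<dots> = - ?c * ?A * (cnj z2 - z1) * ?E *
      (Z_over (Suc m) z1 (cnj z2) * kappa_over (Suc m) z2 (cnj z1) z1 (cnj z2))"
    unfolding Z_kappa by (simp add: algebra_simps)
  finally show ?thesis by (simp add: mult_ac)
qed

lemma D11_transposed_integrand:
  "(let Z = (\<lambda>l. if l = 2 then z2 else w l); Zb = (\<lambda>l. if l = 2 then cnj z1 else cnj (w l))
    in (\<Prod>l\<in>{2..Suc (Suc m)}. \<Prod>j\<in>{2..<l}. (Z j - Z l) * (Zb j - Zb l) * (Z j - Zb l) * (Zb j - Z l)) *
       (\<Prod>l\<in>{2..Suc (Suc m)}. (Z l - Zb l) * (Zb l - Z l) * omega_over (Z l) (Zb l) z1 (cnj z2))) =
   (z2 - cnj z1) * omega_over z2 (cnj z1) z1 (cnj z2) * ((cnj z1 - z2) * D12_integrand (Suc (Suc m)) z1 z2 w)"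
proof -
  have points: "interleave (\<lambda>i. if i + 2 = 2 then z2 else w (i + 2)) (\<lambda>i. if i + 2 = 2 then cnj z1 else cnj (w (i + 2))) =
      D12_points z1 z2 w"
    by simp
  have "{2..Suc (Suc m)} = insert 2 {3..<m+3}" by auto
  then have "(\<Prod>l\<in>{2..Suc (Suc m)}. ((if l = 2 then z2 else w l) - (if l = 2 then cnj z1 else cnj (w l))) *
        omega_over (if l = 2 then z2 else w l) (if l = 2 then cnj z1 else cnj (w l)) z1 (cnj z2)) =
      (z2 - cnj z1) * omega_over z2 (cnj z1) z1 (cnj z2) * (\<Prod>i<m. skew_weight z1 (cnj z2) (w (i + 3)))"
    by (simp add: prod_atLeastLessThan_shift skew_weight_def)
  then show ?thesis
    unfolding Let_def D11_product_eq_vandermonde D12_integrand_eq_vandermonde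
    by (simp add: points mult_ac)
qed

lemma D12_prefactor_eq:
  assumes "cmod (z1 - z2) \<noteq> 1" "z1 \<noteq> cnj z2"
  shows "- (of_real ((cmod (z1 - cnj z1))\<^sup>2 * (cmod (z2 - cnj z2))\<^sup>2 * (cmod (z1 - cnj z2))\<^sup>2) *
        exp (- 2 * of_real ((cmod z1)\<^sup>2) - 2 * of_real ((cmod z2)\<^sup>2))) =
    (z1 - cnj z1) * (z2 - cnj z2) * exp (- 2 * of_real ((cmod (z1 - z2))\<^sup>2)) /
      (of_real (1 - (cmod (z1 - z2))\<^sup>2) * of_real ((cmod (z1 - cnj z2))\<^sup>2)) *
    ((z1 - cnj z2) * (cnj z2 - z1) * exp (-2 * z1 * cnj z2) *
      ((z2 - cnj z1) * omega_over z2 (cnj z1) z1 (cnj z2) * (cnj z1 - z2)))"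
proof -
  define D1 where "D1 = 1 - (z1 - z2) * (cnj z1 - cnj z2)"
  define D2 where "D2 = (z1 - cnj z2) * (cnj z1 - z2)"
  define X where "X = exp (- 2 * complex_of_real ((cmod (z1 - z2))\<^sup>2))"
  have D1_eq: "complex_of_real (1 - (cmod (z1 - z2))\<^sup>2) = D1"
    unfolding D1_def of_real_diff complex_norm_square by simp
  have D2_eq: "complex_of_real ((cmod (z1 - cnj z2))\<^sup>2) = D2"
    unfolding D2_def complex_norm_square by simp
  have "(cmod (z1 - z2))\<^sup>2 \<noteq> 1"
    using assms(1) by (simp add: abs_square_eq_1)
  then have "D1 \<noteq> 0"
    unfolding D1_eq[symmetric] of_real_eq_0_iff by simp
  moreover have "D2 \<noteq> 0"
    unfolding D2_eq[symmetric] using assms(2) by simp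
  moreover have "exp (- 2 * complex_of_real ((cmod z1)\<^sup>2) - 2 * complex_of_real ((cmod z2)\<^sup>2)) =
      X * exp (-2 * z1 * cnj z2) * exp (-2 * z2 * cnj z1)"
  proof -
    have "- 2 * complex_of_real ((cmod z1)\<^sup>2) - 2 * complex_of_real ((cmod z2)\<^sup>2) =
        - 2 * complex_of_real ((cmod (z1 - z2))\<^sup>2) + (-2 * z1 * cnj z2) + (-2 * z2 * cnj z1)"
      unfolding complex_norm_square by (simp add: algebra_simps)
    then show ?thesis unfolding X_def by (simp only: exp_add)
  qed
  moreover have "- (of_real ((cmod (z1 - cnj z1))\<^sup>2 * (cmod (z2 - cnj z2))\<^sup>2) * D2 *
        (X * exp (-2 * z1 * cnj z2) * exp (-2 * z2 * cnj z1))) * (D1 * D2) =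
      (z1 - cnj z1) * (z2 - cnj z2) * X *
      ((z1 - cnj z2) * (cnj z2 - z1) * exp (-2 * z1 * cnj z2) *
        ((z2 - cnj z1) * omega_over z2 (cnj z1) z1 (cnj z2) * (cnj z1 - z2)))"
    unfolding of_real_mult complex_norm_square complex_cnj_diff complex_cnj_cnj omega_over_def D1_def D2_def
    by Groebner_Basis.algebra
  ultimately show ?thesis
    unfolding of_real_mult[of _ "(cmod (z1 - cnj z2))\<^sup>2"] D1_eq D2_eq X_def[symmetric]
    by (simp add: eq_divide_eq times_divide_eq_left)
qed

lemma D12_eq_transpT_D11:
  assumes "cmod (z1 - z2) \<noteq> 1" "z1 \<noteq> cnj z2"
  shows "D12 (Suc (Suc m)) z1 z2 =
    (z1 - cnj z1) * (z2 - cnj z2) * exp (- 2 * of_real ((cmod (z1 - z2))\<^sup>2)) /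
      (of_real (1 - (cmod (z1 - z2))\<^sup>2) * of_real ((cmod (z1 - cnj z2))\<^sup>2)) *
    transpT (D11 (Suc (Suc m))) z1 (cnj z1) z2 (cnj z2)"
proof -
  let ?N = "Suc (Suc m)"
  let ?I = "\<integral>w. D12_integrand ?N z1 z2 w \<partial>PiM {3..?N} (\<lambda>_. lborel)"
  let ?K = "(z2 - cnj z1) * omega_over z2 (cnj z1) z1 (cnj z2) * (cnj z1 - z2)"
  let ?C = "complex_of_real (real ?N * (real ?N - 1) / Zg ?N)"
  let ?Q = "1 / complex_of_real (pi ^ (?N - 2))"
  have "transpT (D11 ?N) z1 (cnj z1) z2 (cnj z2) =
      ?C * ((z1 - cnj z2) * (cnj z2 - z1)) * exp (-2 * z1 * cnj z2) * ?Q * (?K * ?I)"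
    unfolding transpT_def D11_def D11_transposed_integrand by (simp add: mult_ac)
  moreover have "D12 ?N z1 z2 = ?C *
      - (of_real ((cmod (z1 - cnj z1))\<^sup>2 * (cmod (z2 - cnj z2))\<^sup>2 * (cmod (z1 - cnj z2))\<^sup>2) *
        exp (- 2 * of_real ((cmod z1)\<^sup>2) - 2 * of_real ((cmod z2)\<^sup>2))) * ?Q * ?I"
    unfolding D12_def D12_integrand_def by (simp only: mult_ac mult_minus_left mult_minus_right)
  ultimately show ?thesis
    unfolding D12_prefactor_eq[OF assms] by (simp only: mult_ac)
qed

theorem lemma2p2:
  fixes N :: nat and z1 z2 :: complex
  assumes "N \<ge> 2"
    and "cmod (z1 - z2) \<noteq> 1"
    and "z1 \<noteq> cnj z2"
    and "invertible_mat (skew_moment_mat (N - 1) z1 (cnj z2))"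
  shows "D12 N z1 z2 =
           (z1 - cnj z1) * (z2 - cnj z2) * exp (- 2 * of_real ((cmod (z1 - z2))\<^sup>2)) /
             (of_real (1 - (cmod (z1 - z2))\<^sup>2) * of_real ((cmod (z1 - cnj z2))\<^sup>2)) *
           transpT (D11 N) z1 (cnj z1) z2 (cnj z2) \<and>
         D12 N z1 z2 =
           - (of_nat N * Z_over (N - 1) z1 (cnj z2) / of_real (Zg N)) *
           of_real ((cmod (z1 - cnj z1))\<^sup>2 * (cmod (z2 - cnj z2))\<^sup>2) * (cnj z2 - z1) *
           exp (- 2 * of_real ((cmod z1)\<^sup>2) - 2 * of_real ((cmod z2)\<^sup>2)) *
           kappa_over (N - 1) z2 (cnj z1) z1 (cnj z2)"
proof -
  obtain m where N: "N = Suc (Suc m)"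
    using assms(1) by (metis add_2_eq_Suc le_Suc_ex)
  with assms(4) have inv: "invertible_mat (skew_moment_mat (Suc m) z1 (cnj z2))" by simp
  show ?thesis
    unfolding N diff_Suc_1
    using D12_eq_transpT_D11[OF assms(2,3)] D12_eq_kappa_over[OF inv] by blast
qed

end
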